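(* Let $\lambda$ be the security parameter, $q$ a modulus, $m,n\in\mathbb{N}$, and let $\mathsf{NMIFE}^{\mathrm{ot}}$ be the scheme for multi-input inner products over $\mathbb{Z}_q$ described in the context. Then $\mathsf{NMIFE}^{\mathrm{ot}}$ is $\mathsf{IND}$-secure; more precisely, for any $\mathsf{PPT}$ adversary $\mathcal{A}$, $$\mathsf{Adv}^{\mathsf{IND}}_{\mathsf{NMIFE}^{\mathrm{ot}},\mathcal{A}}(\lambda)=0 .$$
   Context: Notation: $[n]=\{1,\dots,n\}$. For vectors $\mathbf{y}=(\mathbf{y}_1,\dots,\mathbf{y}_n)\in(\mathbb{Z}_q^m)^n$ let $f_{\mathbf{y}}(\mathbf{x}_1,\dots,\mathbf{x}_n)=\sum_{i\in[n]}\langle \mathbf{x}_i,\mathbf{y}_i\rangle \bmod q$. For $\Delta\in\mathbb{Z}_q$, $\mathcal{D}_\Delta$ denotes the distribution outputting $\Delta$ with probability one. The scheme $\mathsf{NMIFE}^{\mathrm{ot}}$: - $\mathsf{Setup}(1^\lambda,m,n)$: for each $i\in[n]$ sample $\mathsf{ek}_i\leftarrow\mathbb{Z}_q^m$ uniformly; output $\mathsf{msk}=\{(i,\mathsf{ek}_i)\}_{i\in[n]}$. - $\mathsf{Enc}(\mathsf{ek}_i,\mathbf{x}_i)$ for $\mathbf{x}_i\in\mathbb{Z}_q^m$: output $\mathsf{ct}_i=(i,\mathbf{c}_i:=\mathbf{x}_i+\mathsf{ek}_i \bmod q)$. - $\mathsf{KeyGen}(\mathsf{msk},f_{\mathbf{y}},\mathcal{D})$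 for a distribution $\mathcal{D}$ over $\mathbb{Z}_q$: sample $\Delta\leftarrow\mathcal{D}$ and output $\mathsf{dk}_{\mathbf{y}}=(\mathbf{y},z:=\sum_{i\in[n]}\langle \mathsf{ek}_i,\mathbf{y}_i\rangle-\Delta \bmod q)$. - $\mathsf{Dec}(\mathsf{dk}_{\mathbf{y}},\mathsf{ct}_1,\dots,\mathsf{ct}_n)$: output $\sum_{i\in[n]}\langle\mathbf{c}_i,\mathbf{y}_i\rangle-z\bmod q$. Security game $\mathsf{IND}_\beta$ ($\beta\in\{0,1\}$) between adversary $\mathcal{A}$ and challenger: the challenger runs $\mathsf{Setup}(1^\lambda,m,n)$ and chooses the bit $\beta$. $\mathcal{A}$ may adaptively make encryption queries $\mathsf{QEnc}(i,\mathbf{x}_i^0,\mathbf{x}_i^1)$, answered by $\mathsf{Enc}(\mathsf{ek}_i,\mathbf{x}_i^\beta)$, where only one query per slot $i$ is answered (later ones for the same $i$ are ignored), and decryption-key queries $\mathsf{QKeyGen}(f_{\mathbf{y}},\Delta^0,\Delta^1)$ with $\Delta^0,\Delta^1\in\mathbb{Z}_q$, answered by $\mathsf{KeyGen}(\mathsf{msk},f_{\mathbf{y}},\mathcal{D}_{\Delta^\beta})$. Finally $\mathcal{A}$ outputs $\beta'$; if $\mathcal{A}$ was not admissible, $\beta'$ is set to $0$; the game outputs $\beta'$. $\mathcal{A}$ is admissible if (a) whenever some decryption-key query was made, every slot $i\in[n]$ has been queried to $\mathsf{QEnc}$, and (b) for every key query $\mathsf{QKeyGen}(f_{\mathbf{y}},\Delta^0,\Delta^1)$,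 $f_{\mathbf{y}}(\mathbf{x}_1^0,\dots,\mathbf{x}_n^0)+\Delta^0=f_{\mathbf{y}}(\mathbf{x}_1^1,\dots,\mathbf{x}_n^1)+\Delta^1$, where $\mathbf{x}_i^b$ are the answered encryption queries. The advantage is $\mathsf{Adv}^{\mathsf{IND}}_{\mathsf{NMIFE}^{\mathrm{ot}},\mathcal{A}}(\lambda)=|\Pr[\mathsf{IND}_0(\lambda,\mathcal{A})=1]-\Pr[\mathsf{IND}_1(\lambda,\mathcal{A})=1]|$; the scheme is $\mathsf{IND}$-secure if this is negligible for all $\mathsf{PPT}$ $\mathcal{A}$. *)

theory Defs
  imports "HOL-Probability.Probability_Mass_Function" "HOL-Library.FuncSet"
begin

definition Zq :: "int \<Rightarrow> int set" where
  "Zq q = {0..<q}"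

definition Zqm :: "int \<Rightarrow> nat \<Rightarrow> int list set" where
  "Zqm q m = {v. length v = m \<and> set v \<subseteq> Zq q}"

definition ip :: "int list \<Rightarrow> int list \<Rightarrow> int" where
  "ip a b = sum_list (map2 (*) a b)"

definition fy :: "int \<Rightarrow> nat \<Rightarrow> (nat \<Rightarrow> int list) \<Rightarrow> (nat \<Rightarrow> int list) \<Rightarrow> int" where
  "fy q n y x = (\<Sum>i\<in>{1..n}. ip (x i) (y i)) mod q"

definition Setup :: "int \<Rightarrow> nat \<Rightarrow> nat \<Rightarrow> (nat \<Rightarrow> int list) pmf" where
  "Setup q m n = pmf_of_set (PiE {1..n} (\<lambda>_. Zqm q m))"

definition Enc :: "int \<Rightarrow> int list \<Rightarrow> int list \<Rightarrow> int list" where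
  "Enc q ek x = map2 (\<lambda>a b. (a + b) mod q) x ek"

text \<open>KeyGen with the point distribution D_Delta: returns the z-part of dk_y = (y, z).\<close>
definition KeyGenPt :: "int \<Rightarrow> nat \<Rightarrow> (nat \<Rightarrow> int list) \<Rightarrow> (nat \<Rightarrow> int list) \<Rightarrow> int \<Rightarrow> int" where
  "KeyGenPt q n msk y \<Delta> = ((\<Sum>i\<in>{1..n}. ip (msk i) (y i)) - \<Delta>) mod q"

definition Dec :: "int \<Rightarrow> nat \<Rightarrow> (nat \<Rightarrow> int list) \<Rightarrow> int \<Rightarrow> (nat \<Rightarrow> int list) \<Rightarrow> int" where
  "Dec q n y z c = ((\<Sum>i\<in>{1..n}. ip (c i) (y i)) - z) mod q"

text \<open>A deterministic adaptive adversary strategy: either outputs its guess, or makes an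
encryption query QEnc(i, x^0, x^1) and continues depending on the answer (None if the
query is ignored, Some c_i otherwise), or makes a key query QKeyGen(f_y, Delta^0, Delta^1)
and continues depending on the returned z. A (randomized) adversary is a probability
distribution over such strategies (its random coins).\<close>

datatype adv =
    Guess bool
  | AEnc nat "int list" "int list" "int list option \<Rightarrow> adv"
  | AKey "nat \<Rightarrow> int list" int int "int \<Rightarrow> adv"

definition sel :: "bool \<Rightarrow> 'a \<Rightarrow> 'a \<Rightarrow> 'a" where
  "sel \<beta> a0 a1 = (if \<beta> then a1 else a0)"

text \<open>State: answered encryption queries E (slot \<mapsto> (x^0,x^1)),
list K of key queries (y, Delta^0, Delta^1), and a flag ok recording that all queries were
well-typed (slot in [n], vectors in Z_q^m, Delta's in Z_q).\<close>
primrec run :: "int \<Rightarrow> nat \<Rightarrow> nat \<Rightarrow> (nat \<Rightarrow> int list) \<Rightarrow> bool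
    \<Rightarrow> (nat \<Rightarrow> (int list \<times> int list) option) \<Rightarrow> ((nat \<Rightarrow> int list) \<times> int \<times> int) list \<Rightarrow> bool
    \<Rightarrow> adv \<Rightarrow> bool \<times> (nat \<Rightarrow> (int list \<times> int list) option) \<times> ((nat \<Rightarrow> int list) \<times> int \<times> int) list \<times> bool"
where
  "run q m n msk \<beta> E K ok (Guess b) = (b, E, K, ok)"
| "run q m n msk \<beta> E K ok (AEnc i x0 x1 k) =
     (let ok' = (ok \<and> i \<in> {1..n} \<and> x0 \<in> Zqm q m \<and> x1 \<in> Zqm q m) in
      if E i = None
      then run q m n msk \<beta> (E(i := Some (x0, x1))) K ok' (k (Some (Enc q (msk i) (sel \<beta> x0 x1))))
      else run q m n msk \<beta> E K ok' (k None))"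
| "run q m n msk \<beta> E K ok (AKey y d0 d1 k) =
     (let ok' = (ok \<and> (\<forall>i\<in>{1..n}. y i \<in> Zqm q m) \<and> d0 \<in> Zq q \<and> d1 \<in> Zq q) in
      run q m n msk \<beta> E (K @ [(y, d0, d1)]) ok' (k (KeyGenPt q n msk y (sel \<beta> d0 d1))))"

definition admissible :: "int \<Rightarrow> nat \<Rightarrow> (nat \<Rightarrow> (int list \<times> int list) option)
    \<Rightarrow> ((nat \<Rightarrow> int list) \<times> int \<times> int) list \<Rightarrow> bool \<Rightarrow> bool" where
  "admissible q n E K ok \<longleftrightarrow> ok
     \<and> (K \<noteq> [] \<longrightarrow> (\<forall>i\<in>{1..n}. E i \<noteq> None))
     \<and> (\<forall>(y, d0, d1)\<in>set K.
          (fy q n y (\<lambda>i. fst (the (E i))) + d0) mod q = (fy q n y (\<lambda>i. snd (the (E i))) + d1) mod q)"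

text \<open>The game IND_beta; False encodes beta = 0, True encodes beta = 1. Output: beta'.\<close>
definition IND :: "int \<Rightarrow> nat \<Rightarrow> nat \<Rightarrow> bool \<Rightarrow> adv pmf \<Rightarrow> bool pmf" where
  "IND q m n \<beta> A = do {
     a \<leftarrow> A;
     msk \<leftarrow> Setup q m n;
     let (b, E, K, ok) = run q m n msk \<beta> (\<lambda>_. None) [] True a;
     return_pmf (admissible q n E K ok \<and> b)
   }"

definition Adv_IND :: "int \<Rightarrow> nat \<Rightarrow> nat \<Rightarrow> adv pmf \<Rightarrow> real" where
  "Adv_IND q m n A = \<bar>pmf (IND q m n False A) True - pmf (IND q m n True A) True\<bar>"

end

(*
  The key is a one-time pad, so every adversary view is equally likely under both bits.
  Concretely, given a key msk and the transcript of a winning run with bit beta, shift ek_i by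
  x_i^beta - x_i^(1-beta) in every queried slot i. With the shifted key and the other bit, each
  ciphertext is unchanged, and each answer z to a key query is unchanged because admissibility
  says f_y(x^0) + Delta^0 = f_y(x^1) + Delta^1. Hence the run is the same, including its
  transcript, so the shift can be undone; it is an injection from the winning keys for beta
  into those for 1 - beta. Both bits therefore have equally many winning keys.
*)

theory Submission
  imports Defs
begin

lemma in_Zqm_iff: "x \<in> Zqm q m \<longleftrightarrow> length x = m \<and> (\<forall>j<m. 0 \<le> x ! j \<and> x ! j < q)"
  unfolding Zqm_def Zq_def by (auto simp: in_set_conv_nth subset_iff)

lemma finite_Zqm: "finite (Zqm q m)"
  using finite_lists_length_eq[of "{0..<q}" m] by (simp add: Zqm_def Zq_def conj_commute)

lemma replicate_zero_in_Zqm: "0 < q \<Longrightarrow> replicate m 0 \<in> Zqm q m"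
  by (simp add: in_Zqm_iff)

definition rekey :: "int \<Rightarrow> nat \<Rightarrow> int list \<Rightarrow> int list \<Rightarrow> int list \<Rightarrow> int list" where
  "rekey q m e u v = map (\<lambda>j. (e ! j + u ! j - v ! j) mod q) [0..<m]"

lemma rekey_in_Zqm: "0 < q \<Longrightarrow> rekey q m e u v \<in> Zqm q m"
  by (simp add: in_Zqm_iff rekey_def)

lemma Enc_rekey:
  assumes "length e = m" "length u = m" "length v = m"
  shows "Enc q (rekey q m e u v) v = Enc q e u"
  using assms by (intro nth_equalityI) (auto simp: Enc_def rekey_def mod_simps add.commute)

lemma rekey_rekey:
  assumes "e \<in> Zqm q m"
  shows "rekey q m (rekey q m e u v) v u = e"
proof (rule nth_equalityI)
  fix j assume "j < length (rekey q m (rekey q m e u v) v u)"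
  then have "j < m" by (simp add: rekey_def)
  have "((e ! j + u ! j - v ! j) mod q + v ! j - u ! j) mod q
      = ((e ! j + u ! j - v ! j) mod q + (v ! j - u ! j)) mod q"
    by (simp add: algebra_simps)
  also have "\<dots> = e ! j mod q"
    by (simp add: mod_add_left_eq)
  also have "\<dots> = e ! j"
    using assms \<open>j < m\<close> by (simp add: in_Zqm_iff)
  finally have "((e ! j + u ! j - v ! j) mod q + v ! j - u ! j) mod q = e ! j" .
  then show "rekey q m (rekey q m e u v) v u ! j = e ! j"
    using \<open>j < m\<close> by (simp add: rekey_def)
qed (use assms in \<open>simp add: rekey_def in_Zqm_iff\<close>)

lemma ip_conv_sum: "length a = m \<Longrightarrow> length b = m \<Longrightarrow> ip a b = (\<Sum>j<m. a ! j * b ! j)"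
  unfolding ip_def by (simp add: sum_list_sum_nth atLeast0LessThan)

lemma ip_rekey_mod:
  assumes "length e = m" "length u = m" "length v = m" "length y = m"
  shows "ip (rekey q m e u v) y mod q = (ip e y + ip u y - ip v y) mod q"
proof -
  have "ip (rekey q m e u v) y mod q = (\<Sum>j<m. (e ! j + u ! j - v ! j) mod q * y ! j) mod q"
    using assms by (simp add: ip_conv_sum rekey_def)
  also have "\<dots> = (\<Sum>j<m. (e ! j + u ! j - v ! j) mod q * y ! j mod q) mod q"
    by (simp add: mod_sum_eq)
  also have "\<dots> = (\<Sum>j<m. (e ! j + u ! j - v ! j) * y ! j mod q) mod q"
    by (simp add: mod_mult_left_eq)
  also have "\<dots> = (\<Sum>j<m. (e ! j + u ! j - v ! j) * y ! j) mod q"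
    by (simp add: mod_sum_eq)
  also have "(\<Sum>j<m. (e ! j + u ! j - v ! j) * y ! j) = ip e y + ip u y - ip v y"
    using assms by (simp add: ip_conv_sum algebra_simps sum.distrib sum_subtractf)
  finally show ?thesis .
qed

lemma run_extends:
  "run q m n msk \<beta> E K ok a = (b, E', K', ok') \<Longrightarrow> E \<subseteq>\<^sub>m E' \<and> set K \<subseteq> set K' \<and> (ok' \<longrightarrow> ok)"
proof (induction a arbitrary: E K ok)
  case (AEnc i x0 x1 k)
  then show ?case
    by (cases "E i") (auto simp: Let_def map_le_def dom_def dest!: AEnc.IH[OF rangeI])
next
  case (AKey y d0 d1 k)
  then show ?case by (auto simp: Let_def dest!: AKey.IH[OF rangeI])
qed simp

definition wf_queries :: "int \<Rightarrow> nat \<Rightarrow> nat \<Rightarrow> (nat \<Rightarrow> (int list \<times> int list) option)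
    \<Rightarrow> ((nat \<Rightarrow> int list) \<times> int \<times> int) list \<Rightarrow> bool" where
  "wf_queries q m n E K \<longleftrightarrow>
     (\<forall>i x0 x1. E i = Some (x0, x1) \<longrightarrow> i \<in> {1..n} \<and> x0 \<in> Zqm q m \<and> x1 \<in> Zqm q m)
     \<and> (\<forall>(y, _, _)\<in>set K. \<forall>i\<in>{1..n}. y i \<in> Zqm q m)"

lemma run_wf_queries:
  "run q m n msk \<beta> E K ok a = (b, E', K', ok') \<Longrightarrow> ok' \<Longrightarrow> wf_queries q m n E K
    \<Longrightarrow> wf_queries q m n E' K'"
proof (induction a arbitrary: E K ok)
  case (AEnc i x0 x1 k)
  let ?ok = "ok \<and> i \<in> {1..n} \<and> x0 \<in> Zqm q m \<and> x1 \<in> Zqm q m"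
  show ?case
  proof (cases "E i")
    case None
    with AEnc.prems(1) have run: "run q m n msk \<beta> (E(i \<mapsto> (x0, x1))) K ?ok
        (k (Some (Enc q (msk i) (sel \<beta> x0 x1)))) = (b, E', K', ok')"
      by (simp add: Let_def)
    then have ?ok
      using \<open>ok'\<close> run_extends by blast
    with AEnc.prems(3) have "wf_queries q m n (E(i \<mapsto> (x0, x1))) K"
      by (auto simp: wf_queries_def)
    from AEnc.IH[OF rangeI run \<open>ok'\<close> this] show ?thesis .
  next
    case Some
    with AEnc.prems(1) have "run q m n msk \<beta> E K ?ok (k None) = (b, E', K', ok')"
      by (simp add: Let_def)
    from AEnc.IH[OF rangeI this AEnc.prems(2,3)] show ?thesis .
  qed
next
  case (AKey y d0 d1 k)
  let ?ok = "ok \<and> (\<forall>i\<in>{1..n}. y i \<in> Zqm q m) \<and> d0 \<in> Zq q \<and> d1 \<in> Zq q"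
  from AKey.prems(1) have run: "run q m n msk \<beta> E (K @ [(y, d0, d1)]) ?ok
      (k (KeyGenPt q n msk y (sel \<beta> d0 d1))) = (b, E', K', ok')"
    by (simp add: Let_def)
  then have ?ok
    using \<open>ok'\<close> run_extends by blast
  with AKey.prems(3) have "wf_queries q m n E (K @ [(y, d0, d1)])"
    by (auto simp: wf_queries_def)
  from AKey.IH[OF rangeI run \<open>ok'\<close> this] show ?case .
qed simp

lemma run_cong_answers:
  assumes "\<And>i x0 x1. E' i = Some (x0, x1)
      \<Longrightarrow> Enc q (msk' i) (sel \<beta>' x0 x1) = Enc q (msk i) (sel \<beta> x0 x1)"
    and "\<And>y d0 d1. (y, d0, d1) \<in> set K'
      \<Longrightarrow> KeyGenPt q n msk' y (sel \<beta>' d0 d1) = KeyGenPt q n msk y (sel \<beta> d0 d1)"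
  shows "run q m n msk \<beta> E K ok a = (b, E', K', ok')
    \<Longrightarrow> run q m n msk' \<beta>' E K ok a = (b, E', K', ok')"
proof (induction a arbitrary: E K ok)
  case (AEnc i x0 x1 k)
  let ?ok = "ok \<and> i \<in> {1..n} \<and> x0 \<in> Zqm q m \<and> x1 \<in> Zqm q m"
  show ?case
  proof (cases "E i")
    case None
    with AEnc.prems have run: "run q m n msk \<beta> (E(i \<mapsto> (x0, x1))) K ?ok
        (k (Some (Enc q (msk i) (sel \<beta> x0 x1)))) = (b, E', K', ok')"
      by (simp add: Let_def)
    then have "E' i = Some (x0, x1)"
      using run_extends by (fastforce simp: map_le_def)
    with AEnc.IH[OF rangeI run] None show ?thesis
      by (simp add: Let_def assms(1) del: fun_upd_apply)
  next
    case Some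
    with AEnc.prems have "run q m n msk \<beta> E K ?ok (k None) = (b, E', K', ok')"
      by (simp add: Let_def)
    from AEnc.IH[OF rangeI this] Some show ?thesis
      by (simp add: Let_def)
  qed
next
  case (AKey y d0 d1 k)
  let ?ok = "ok \<and> (\<forall>i\<in>{1..n}. y i \<in> Zqm q m) \<and> d0 \<in> Zq q \<and> d1 \<in> Zq q"
  from AKey.prems have run: "run q m n msk \<beta> E (K @ [(y, d0, d1)]) ?ok
      (k (KeyGenPt q n msk y (sel \<beta> d0 d1))) = (b, E', K', ok')"
    by (simp add: Let_def)
  then have "(y, d0, d1) \<in> set K'"
    using run_extends by fastforce
  with AKey.IH[OF rangeI run] show ?case
    by (simp add: Let_def assms(2))
qed simp

lemma sum_ip_rekey_mod:
  assumes "\<And>i. i \<in> I \<Longrightarrow> length (e i) = m \<and> length (u i) = m \<and> length (v i) = m \<and> length (y i) = m"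
  shows "(\<Sum>i\<in>I. ip (rekey q m (e i) (u i) (v i)) (y i)) mod q
    = ((\<Sum>i\<in>I. ip (e i) (y i)) + (\<Sum>i\<in>I. ip (u i) (y i)) - (\<Sum>i\<in>I. ip (v i) (y i))) mod q"
proof -
  have "(\<Sum>i\<in>I. ip (rekey q m (e i) (u i) (v i)) (y i)) mod q
      = (\<Sum>i\<in>I. ip (rekey q m (e i) (u i) (v i)) (y i) mod q) mod q"
    by (simp add: mod_sum_eq)
  also have "\<dots> = (\<Sum>i\<in>I. (ip (e i) (y i) + ip (u i) (y i) - ip (v i) (y i)) mod q) mod q"
    using assms by (simp add: ip_rekey_mod)
  also have "\<dots> = (\<Sum>i\<in>I. ip (e i) (y i) + ip (u i) (y i) - ip (v i) (y i)) mod q"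
    by (simp add: mod_sum_eq)
  finally show ?thesis
    by (simp add: sum.distrib sum_subtractf)
qed

lemma KeyGenPt_rekey:
  assumes lengths: "\<And>i. i \<in> {1..n}
      \<Longrightarrow> length (msk i) = m \<and> length (x0 i) = m \<and> length (x1 i) = m \<and> length (y i) = m"
    and admissible: "(fy q n y x0 + d0) mod q = (fy q n y x1 + d1) mod q"
  shows "KeyGenPt q n (\<lambda>i. rekey q m (msk i) (sel \<beta> (x0 i) (x1 i)) (sel (\<not> \<beta>) (x0 i) (x1 i)))
      y (sel (\<not> \<beta>) d0 d1) = KeyGenPt q n msk y (sel \<beta> d0 d1)"
proof -
  define Se where "Se = (\<Sum>i\<in>{1..n}. ip (msk i) (y i))"
  define Su where "Su = (\<Sum>i\<in>{1..n}. ip (sel \<beta> (x0 i) (x1 i)) (y i))"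
  define Sv where "Sv = (\<Sum>i\<in>{1..n}. ip (sel (\<not> \<beta>) (x0 i) (x1 i)) (y i))"
  have "(Su + sel \<beta> d0 d1) mod q = (Sv + sel (\<not> \<beta>) d0 d1) mod q"
    using admissible by (cases \<beta>) (simp_all add: Su_def Sv_def sel_def fy_def mod_add_left_eq)
  then have challenge: "q dvd (Su + sel \<beta> d0 d1) - (Sv + sel (\<not> \<beta>) d0 d1)"
    by (simp add: mod_eq_dvd_iff)
  have "KeyGenPt q n (\<lambda>i. rekey q m (msk i) (sel \<beta> (x0 i) (x1 i)) (sel (\<not> \<beta>) (x0 i) (x1 i)))
      y (sel (\<not> \<beta>) d0 d1) = (Se + Su - Sv - sel (\<not> \<beta>) d0 d1) mod q"
    unfolding KeyGenPt_def
  proof (rule mod_diff_cong)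
    show "(\<Sum>i\<in>{1..n}. ip (rekey q m (msk i) (sel \<beta> (x0 i) (x1 i)) (sel (\<not> \<beta>) (x0 i) (x1 i))) (y i))
        mod q = (Se + Su - Sv) mod q"
      unfolding Se_def Su_def Sv_def
      by (rule sum_ip_rekey_mod) (use lengths in \<open>simp add: sel_def\<close>)
  qed simp
  also have "\<dots> = (Se - sel \<beta> d0 d1) mod q"
    unfolding mod_eq_dvd_iff using challenge by (simp add: algebra_simps)
  also have "\<dots> = KeyGenPt q n msk y (sel \<beta> d0 d1)"
    by (simp add: KeyGenPt_def Se_def)
  finally show ?thesis .
qed

(* Outside [n] the value is undefined, so that swapped keys stay in the extensional key space. *)
definition swap_keys :: "int \<Rightarrow> nat \<Rightarrow> nat \<Rightarrow> bool \<Rightarrow> (nat \<Rightarrow> (int list \<times> int list) option)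
    \<Rightarrow> (nat \<Rightarrow> int list) \<Rightarrow> nat \<Rightarrow> int list" where
  "swap_keys q m n \<beta> E msk i =
     (if i \<in> {1..n} then
        (case E i of
          None \<Rightarrow> msk i
        | Some (x0, x1) \<Rightarrow> rekey q m (msk i) (sel \<beta> x0 x1) (sel (\<not> \<beta>) x0 x1))
      else undefined)"

lemma swap_keys_in_keys:
  assumes "0 < q" "msk \<in> PiE {1..n} (\<lambda>_. Zqm q m)"
  shows "swap_keys q m n \<beta> E msk \<in> PiE {1..n} (\<lambda>_. Zqm q m)"
  using assms by (auto simp: swap_keys_def PiE_iff extensional_def rekey_in_Zqm split: option.split)

lemma swap_keys_swap_keys:
  assumes "msk \<in> PiE {1..n} (\<lambda>_. Zqm q m)"
  shows "swap_keys q m n (\<not> \<beta>) E (swap_keys q m n \<beta> E msk) = msk"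
proof
  fix i
  show "swap_keys q m n (\<not> \<beta>) E (swap_keys q m n \<beta> E msk) i = msk i"
    using assms by (cases "i \<in> {1..n}")
      (auto simp: swap_keys_def rekey_rekey PiE_iff extensional_def sel_def split: option.split)
qed

lemma run_swap_keys:
  assumes msk: "msk \<in> PiE {1..n} (\<lambda>_. Zqm q m)"
    and run: "run q m n msk \<beta> (\<lambda>_. None) [] True a = (b, E, K, ok)"
    and admissible: "admissible q n E K ok"
  shows "run q m n (swap_keys q m n \<beta> E msk) (\<not> \<beta>) (\<lambda>_. None) [] True a = (b, E, K, ok)"
proof -
  have wf: "wf_queries q m n E K"
    using admissible by (intro run_wf_queries[OF run]) (auto simp: admissible_def wf_queries_def)
  have msk_wf: "msk i \<in> Zqm q m" if "i \<in> {1..n}" for i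
    using msk that by (auto simp: PiE_iff)
  show ?thesis
  proof (rule run_cong_answers[OF _ _ run])
    fix i x0 x1
    assume "E i = Some (x0, x1)"
    with wf msk_wf
    show "Enc q (swap_keys q m n \<beta> E msk i) (sel (\<not> \<beta>) x0 x1) = Enc q (msk i) (sel \<beta> x0 x1)"
      by (auto simp: wf_queries_def swap_keys_def sel_def Zqm_def intro!: Enc_rekey)
  next
    fix y d0 d1
    assume yK: "(y, d0, d1) \<in> set K"
    define x0 where "x0 = (\<lambda>i. fst (the (E i)))"
    define x1 where "x1 = (\<lambda>i. snd (the (E i)))"
    have E_x: "E i = Some (x0 i, x1 i)" if "i \<in> {1..n}" for i
      using admissible yK that by (auto simp: admissible_def x0_def x1_def)
    have swap_x: "swap_keys q m n \<beta> E msk i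
        = rekey q m (msk i) (sel \<beta> (x0 i) (x1 i)) (sel (\<not> \<beta>) (x0 i) (x1 i))" if "i \<in> {1..n}" for i
      using that by (simp add: swap_keys_def E_x)
    have "KeyGenPt q n (swap_keys q m n \<beta> E msk) y (sel (\<not> \<beta>) d0 d1)
        = KeyGenPt q n (\<lambda>i. rekey q m (msk i) (sel \<beta> (x0 i) (x1 i)) (sel (\<not> \<beta>) (x0 i) (x1 i)))
            y (sel (\<not> \<beta>) d0 d1)"
      unfolding KeyGenPt_def using swap_x by (intro arg_cong2[where f = "(mod)"] refl) simp
    also have "\<dots> = KeyGenPt q n msk y (sel \<beta> d0 d1)"
    proof (rule KeyGenPt_rekey)
      fix i assume i: "i \<in> {1..n}"
      with wf msk_wf E_x[OF i] yK
      show "length (msk i) = m \<and> length (x0 i) = m \<and> length (x1 i) = m \<and> length (y i) = m"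
        by (fastforce simp: wf_queries_def Zqm_def)
    next
      show "(fy q n y x0 + d0) mod q = (fy q n y x1 + d1) mod q"
        using admissible yK unfolding admissible_def x0_def x1_def by fast
    qed
    finally show "KeyGenPt q n (swap_keys q m n \<beta> E msk) y (sel (\<not> \<beta>) d0 d1)
        = KeyGenPt q n msk y (sel \<beta> d0 d1)" .
  qed
qed

definition wins :: "int \<Rightarrow> nat \<Rightarrow> nat \<Rightarrow> bool \<Rightarrow> adv \<Rightarrow> (nat \<Rightarrow> int list) \<Rightarrow> bool" where
  "wins q m n \<beta> a msk =
     (let (b, E, K, ok) = run q m n msk \<beta> (\<lambda>_. None) [] True a in admissible q n E K ok \<and> b)"

lemma IND_conv_wins: "IND q m n \<beta> A = A \<bind> (\<lambda>a. map_pmf (wins q m n \<beta> a) (Setup q m n))"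
  unfolding IND_def wins_def map_pmf_def by (auto intro!: bind_pmf_cong split: prod.split)

lemma card_wins_le:
  assumes "0 < q"
  shows "card {msk \<in> PiE {1..n} (\<lambda>_. Zqm q m). wins q m n \<beta> a msk}
    \<le> card {msk \<in> PiE {1..n} (\<lambda>_. Zqm q m). wins q m n (\<not> \<beta>) a msk}"
proof -
  define keys where "keys = PiE {1..n} (\<lambda>_. Zqm q m)"
  define queries where "queries msk = fst (snd (run q m n msk \<beta> (\<lambda>_. None) [] True a))" for msk
  define f where "f msk = swap_keys q m n \<beta> (queries msk) msk" for msk
  have f: "f msk \<in> keys \<and> wins q m n (\<not> \<beta>) a (f msk)
      \<and> run q m n (f msk) (\<not> \<beta>) (\<lambda>_. None) [] True a = run q m n msk \<beta> (\<lambda>_. None) [] True a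
      \<and> swap_keys q m n (\<not> \<beta>) (queries msk) (f msk) = msk"
    if "msk \<in> keys" "wins q m n \<beta> a msk" for msk
  proof -
    obtain b E K ok where run: "run q m n msk \<beta> (\<lambda>_. None) [] True a = (b, E, K, ok)"
      by (cases "run q m n msk \<beta> (\<lambda>_. None) [] True a") auto
    with that have "admissible q n E K ok" "b"
      by (simp_all add: wins_def)
    with that run show ?thesis
      using assms swap_keys_in_keys swap_keys_swap_keys run_swap_keys
      by (auto simp: keys_def f_def queries_def wins_def)
  qed
  have "inj_on f {msk \<in> keys. wins q m n \<beta> a msk}"
  proof (rule inj_onI)
    fix x y
    assume x: "x \<in> {msk \<in> keys. wins q m n \<beta> a msk}" and y: "y \<in> {msk \<in> keys. wins q m n \<beta> a msk}"
      and f_eq: "f x = f y"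
    have "queries x = fst (snd (run q m n (f x) (\<not> \<beta>) (\<lambda>_. None) [] True a))"
      using f x by (simp add: queries_def)
    also have "\<dots> = queries y"
      using f y f_eq by (simp add: queries_def)
    finally have "queries x = queries y" .
    then show "x = y"
      using f x y f_eq by (metis (no_types, lifting) mem_Collect_eq)
  qed
  moreover have "f ` {msk \<in> keys. wins q m n \<beta> a msk} \<subseteq> {msk \<in> keys. wins q m n (\<not> \<beta>) a msk}"
    using f by auto
  moreover have "finite keys"
    by (simp add: keys_def finite_PiE finite_Zqm)
  ultimately show ?thesis
    unfolding keys_def by (intro card_inj_on_le) auto
qed

lemma map_pmf_of_set_eq_if_card_eq:
  fixes P Q :: "'a \<Rightarrow> bool"
  assumes "finite S" "S \<noteq> {}" "card {x \<in> S. P x} = card {x \<in> S. Q x}"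
  shows "map_pmf P (pmf_of_set S) = map_pmf Q (pmf_of_set S)"
proof -
  have "S \<inter> P -` {True} = {x \<in> S. P x}" "S \<inter> Q -` {True} = {x \<in> S. Q x}"
    by auto
  then have True: "pmf (map_pmf P (pmf_of_set S)) True = pmf (map_pmf Q (pmf_of_set S)) True"
    using assms by (simp add: pmf_map measure_pmf_of_set)
  show ?thesis
  proof (rule pmf_eqI)
    fix c :: bool
    show "pmf (map_pmf P (pmf_of_set S)) c = pmf (map_pmf Q (pmf_of_set S)) c"
      using True by (cases c) (simp_all add: pmf_False_conv_True)
  qed
qed

theorem theorem1:
  fixes q :: int and m n :: nat and A :: "adv pmf"
  assumes "0 < q"
  shows "Adv_IND q m n A = 0"
proof -
  have "map_pmf (wins q m n False a) (Setup q m n) = map_pmf (wins q m n True a) (Setup q m n)" for a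
    unfolding Setup_def
  proof (rule map_pmf_of_set_eq_if_card_eq)
    show "finite (PiE {1..n} (\<lambda>_. Zqm q m))"
      by (simp add: finite_PiE finite_Zqm)
    show "PiE {1..n} (\<lambda>_. Zqm q m) \<noteq> {}"
      using replicate_zero_in_Zqm[OF assms] by (auto simp: PiE_eq_empty_iff)
    show "card {msk \<in> PiE {1..n} (\<lambda>_. Zqm q m). wins q m n False a msk}
        = card {msk \<in> PiE {1..n} (\<lambda>_. Zqm q m). wins q m n True a msk}"
      using card_wins_le[OF assms, where \<beta> = False] card_wins_le[OF assms, where \<beta> = True]
      by (intro antisym) simp_all
  qed
  then have "IND q m n False A = IND q m n True A"
    by (simp add: IND_conv_wins)
  then show ?thesis
    by (simp add: Adv_IND_def)
qed

end
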